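(* Let $A\in M_n(\mathbb{Z})$ be invertible such that $x\mapsto A^{-1}x$ is a similarity with respect to Euclidean distance, and let $D\subset\mathbb{Z}^n$ be a subset of a complete residue system mod $A$. Let $\alpha\in T_{A,D-D}$ have a unique $(A,D-D)$-representation $(\alpha_j)_{j\ge1}$, and suppose there exist a positive integer $p$, finite sets $U_1,\dots,U_p,V_1,\dots,V_p\subset\mathbb{R}^n$ and $(\beta_j)_{j\ge1}\in D^{\mathbb{N}}$ with $(D\cap(D+\alpha_j))-\beta_j=U_j$ for $1\le j\le p$ and $(D\cap(D+\alpha_j))-\beta_j=U_\ell+V_\ell$ for $j>p$, $j\equiv\ell \pmod p$, $\ell\in\{1,\dots,p\}$. Consider the IFS consisting precisely of the (distinct) maps $$f(x)=A^{-p}\Big(x+\sum_{\ell=1}^p\big(A^{p-\ell}u_\ell+A^{-\ell}v_\ell\big)\Big),\qquad u_\ell\in U_\ell,\ v_\ell\in V_\ell\ (\ell=1,\dots,p).$$ If this IFS satisfies the open set condition, then it satisfies the strong separation condition.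
   Context: A similarity means a map $f$ with $\|f(x)-f(y)\|=c\|x-y\|$ for some $c\in(0,1)$ and all $x,y$. For finite $E\subset\mathbb{R}^n$, $\pi_{A,E}((e_j)_{j\ge1})=\sum_{j\ge1}A^{-j}e_j$, $T_{A,E}=\pi_{A,E}(E^{\mathbb{N}})$, and an $(A,E)$-representation of $x$ is a sequence $(e_j)\in E^{\mathbb{N}}$ with $\pi_{A,E}((e_j))=x$. $D+t=\{d+t:d\in D\}$, $U+V=\{u+v\}$ (Minkowski sum). A complete residue system mod $A$ is a set $\mathcal{D}\subset\mathbb{Z}^n$ mapping bijectively onto $\mathbb{Z}^n/A\mathbb{Z}^n$. An IFS $\{f_i\}_{i=1}^N$ with attractor $K$ satisfies the open set condition if there is a nonempty bounded open set $V$ with $\bigcup_i f_i(V)\subset V$ and the $f_i(V)$ pairwise disjoint; it satisfies the strong separation condition if the sets $f_i(K)$ are pairwise disjoint. *)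

theory Defs
  imports "HOL-Analysis.Analysis"
begin

definition lattice :: "(real^'n) set" where
  "lattice = {x. \<forall>i. x $ i \<in> \<int>}"

definition int_matrix :: "real^'n^'n \<Rightarrow> bool" where
  "int_matrix A \<longleftrightarrow> (\<forall>i j. A $ i $ j \<in> \<int>)"

definition Apow :: "real^'n^'n \<Rightarrow> nat \<Rightarrow> real^'n \<Rightarrow> real^'n" where
  "Apow A k = ((\<lambda>x. A *v x) ^^ k)"

definition Ainvpow :: "real^'n^'n \<Rightarrow> nat \<Rightarrow> real^'n \<Rightarrow> real^'n" where
  "Ainvpow A k = ((\<lambda>x. matrix_inv A *v x) ^^ k)"

definition is_similarity :: "(real^'n \<Rightarrow> real^'n) \<Rightarrow> bool" where
  "is_similarity f \<longleftrightarrow> (\<exists>c. 0 < c \<and> c < 1 \<and> (\<forall>x y. norm (f x - f y) = c * norm (x - y)))"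

definition complete_residue_system :: "real^'n^'n \<Rightarrow> (real^'n) set \<Rightarrow> bool" where
  "complete_residue_system A R \<longleftrightarrow> R \<subseteq> lattice \<and>
     (\<forall>z\<in>lattice. \<exists>!d. d \<in> R \<and> z - d \<in> (\<lambda>x. A *v x) ` lattice)"

text \<open>Sequences in E^N, indexed by j >= 1 (value at 0 is irrelevant).\<close>
definition seqs :: "'a set \<Rightarrow> (nat \<Rightarrow> 'a) set" where
  "seqs E = {e. \<forall>j\<ge>1. e j \<in> E}"

definition piAE :: "real^'n^'n \<Rightarrow> (nat \<Rightarrow> real^'n) \<Rightarrow> real^'n" where
  "piAE A e = (\<Sum>j. Ainvpow A (Suc j) (e (Suc j)))"

definition TAE :: "real^'n^'n \<Rightarrow> (real^'n) set \<Rightarrow> (real^'n) set" where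
  "TAE A E = piAE A ` seqs E"

definition is_rep :: "real^'n^'n \<Rightarrow> (real^'n) set \<Rightarrow> real^'n \<Rightarrow> (nat \<Rightarrow> real^'n) \<Rightarrow> bool" where
  "is_rep A E x e \<longleftrightarrow> e \<in> seqs E \<and> piAE A e = x"

definition unique_rep :: "real^'n^'n \<Rightarrow> (real^'n) set \<Rightarrow> real^'n \<Rightarrow> (nat \<Rightarrow> real^'n) \<Rightarrow> bool" where
  "unique_rep A E x e \<longleftrightarrow> is_rep A E x e \<and> (\<forall>e'. is_rep A E x e' \<longrightarrow> (\<forall>j\<ge>1. e' j = e j))"

definition setdiff :: "('a::ab_group_add) set \<Rightarrow> 'a set \<Rightarrow> 'a set" where
  "setdiff U V = {u - v | u v. u \<in> U \<and> v \<in> V}"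

definition minksum :: "('a::ab_group_add) set \<Rightarrow> 'a set \<Rightarrow> 'a set" where
  "minksum U V = {u + v | u v. u \<in> U \<and> v \<in> V}"

definition translate :: "('a::ab_group_add) set \<Rightarrow> 'a \<Rightarrow> 'a set" where
  "translate D t = (\<lambda>d. d + t) ` D"

definition is_attractor :: "('a::metric_space \<Rightarrow> 'a) set \<Rightarrow> 'a set \<Rightarrow> bool" where
  "is_attractor F K \<longleftrightarrow> compact K \<and> K \<noteq> {} \<and> K = (\<Union>f\<in>F. f ` K)"

definition open_set_condition :: "('a::metric_space \<Rightarrow> 'a) set \<Rightarrow> bool" where
  "open_set_condition F \<longleftrightarrow> (\<exists>V. open V \<and> V \<noteq> {} \<and> bounded V \<and>
     (\<Union>f\<in>F. f ` V) \<subseteq> V \<and> pairwise (\<lambda>f g. disjnt (f ` V) (g ` V)) F)"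

definition strong_separation_condition :: "('a::metric_space \<Rightarrow> 'a) set \<Rightarrow> bool" where
  "strong_separation_condition F \<longleftrightarrow> (\<forall>K. is_attractor F K \<longrightarrow>
     pairwise (\<lambda>f g. disjnt (f ` K) (g ` K)) F)"

definition the_IFS :: "real^'n^'n \<Rightarrow> nat \<Rightarrow> (nat \<Rightarrow> (real^'n) set) \<Rightarrow> (nat \<Rightarrow> (real^'n) set)
    \<Rightarrow> (real^'n \<Rightarrow> real^'n) set" where
  "the_IFS A p U V = {(\<lambda>x. Ainvpow A p (x + (\<Sum>l=1..p. Apow A (p - l) (u l) + Ainvpow A l (v l))))
     | u v. \<forall>l\<in>{1..p}. u l \<in> U l \<and> v l \<in> V l}"

end

theory Submission
  imports Defs
begin

text \<open>
  The maps of the IFS are \<open>x \<mapsto> \<Sum>\<^sub>l A\<^sup>-\<^sup>l u\<^sub>l + A\<^sup>-\<^sup>p (\<Sum>\<^sub>l A\<^sup>-\<^sup>l v\<^sub>l + x)\<close>. Following an infinite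
  address inside the attractor \<open>K\<close>, a point \<open>f x\<close> with \<open>x \<in> K\<close> gets a radix expansion
  \<open>\<Sum>\<^sub>j A\<^sup>-\<^sup>j w\<^sub>j\<close> in which the \<open>v\<close>-part of each map merges with the \<open>u\<close>-part of the next one;
  by the hypotheses on \<open>U\<close> and \<open>V\<close> every digit \<open>w\<^sub>j\<close> lies in \<open>(D \<inter> (D + \<alpha>\<^sub>j)) - \<beta>\<^sub>j\<close>.
  If \<open>f x = g y\<close> for maps \<open>f \<noteq> g\<close>, the two expansions \<open>w\<close>, \<open>w'\<close> make \<open>w - w' + \<alpha>\<close> another
  \<open>(A, D - D)\<close>-representation of the point represented uniquely by \<open>\<alpha>\<close>, so \<open>w = w'\<close>.
  Comparing the first \<open>2p\<close> digits gives maps \<open>h\<close>, \<open>h'\<close> of the IFS with \<open>f \<circ> h = g \<circ> h'\<close>,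
  which the open set condition forbids: for its open set \<open>W\<close>, \<open>f(W)\<close> and \<open>g(W)\<close> are
  disjoint while \<open>h(W), h'(W) \<subseteq> W\<close>. The residue system only serves to make \<open>D\<close> finite, so that all the
  series converge.
\<close>

lemma sum_lessThan_add: "(\<Sum>i<m + (n::nat). f i) = (\<Sum>i<m. f i) + (\<Sum>i<n. f (m + i))"
  by (induction n) (auto simp: add.assoc)

lemma sums_of_lessThan_mult_tendsto:
  fixes f :: "nat \<Rightarrow> 'a::real_normed_vector"
  assumes "summable f" "0 < p" "(\<lambda>k. \<Sum>i<p * k. f i) \<longlonglongrightarrow> s"
  shows "f sums s"
proof -
  have "strict_mono (\<lambda>k::nat. p * k)"
    using assms(2) by (simp add: strict_mono_def)
  from LIMSEQ_subseq_LIMSEQ[OF summable_LIMSEQ[OF assms(1)] this]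
  have "(\<lambda>k. \<Sum>i<p * k. f i) \<longlonglongrightarrow> suminf f" by (simp add: o_def)
  with assms(1,3) show ?thesis
    using LIMSEQ_unique sums_iff by blast
qed

lemma matrix_inv_left:
  fixes A :: "'a::semiring_1^'n^'n"
  assumes "invertible A"
  shows "matrix_inv A ** A = mat 1"
proof -
  have "\<exists>A'. A ** A' = mat 1 \<and> A' ** A = mat 1"
    using assms unfolding invertible_def by blast
  then have "A ** matrix_inv A = mat 1 \<and> matrix_inv A ** A = mat 1"
    unfolding matrix_inv_def by (rule someI_ex)
  then show ?thesis by blast
qed

lemma is_similarity_matrix_norm:
  assumes "is_similarity (\<lambda>x. M *v x)"
  obtains c where "0 < c" "c < 1" "\<And>x. norm (M *v x) = c * norm x"
proof -
  obtain c where "0 < c" "c < 1" and "\<forall>x y. norm (M *v x - M *v y) = c * norm (x - y)"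
    using assms unfolding is_similarity_def by blast
  then show thesis
    by (intro that[of c]) (auto dest: spec[where x=0])
qed

lemma Ainvpow_0 [simp]: "Ainvpow A 0 x = x"
  by (simp add: Ainvpow_def)

lemma Ainvpow_Suc: "Ainvpow A (Suc k) x = matrix_inv A *v Ainvpow A k x"
  by (simp add: Ainvpow_def)

lemma Ainvpow_add: "Ainvpow A (m + k) x = Ainvpow A m (Ainvpow A k x)"
  by (simp add: Ainvpow_def funpow_add)

lemma linear_Ainvpow: "linear (Ainvpow A k)"
proof (induction k)
  case 0
  then show ?case by (simp add: Ainvpow_def linear_id[unfolded id_def])
next
  case (Suc k)
  have "Ainvpow A (Suc k) = (\<lambda>x. matrix_inv A *v x) \<circ> Ainvpow A k"
    by (simp add: Ainvpow_def)
  then show ?case by (simp only:) (rule linear_compose[OF Suc matrix_vector_mul_linear])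
qed

lemma Ainvpow_Apow:
  assumes "invertible A"
  shows "Ainvpow A k (Apow A k x) = x"
proof (induction k)
  case 0
  then show ?case by (simp add: Apow_def)
next
  case (Suc k)
  have "Ainvpow A (Suc k) y = Ainvpow A k (matrix_inv A *v y)" for y
    by (simp add: Ainvpow_def funpow_Suc_right del: funpow.simps)
  then have "Ainvpow A (Suc k) (Apow A (Suc k) x) = Ainvpow A k (matrix_inv A *v (A *v Apow A k x))"
    by (simp add: Apow_def)
  also have "matrix_inv A *v (A *v Apow A k x) = Apow A k x"
    by (simp add: matrix_vector_mul_assoc matrix_inv_left[OF assms])
  finally show ?case using Suc by simp
qed

lemma Ainvpow_Apow_diff:
  assumes "invertible A" "l \<le> p"
  shows "Ainvpow A p (Apow A (p - l) x) = Ainvpow A l x"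
  using Ainvpow_add[of A l "p - l"] Ainvpow_Apow[OF assms(1)] assms(2) by simp

lemma norm_Ainvpow:
  assumes "\<And>x. norm (matrix_inv A *v x) = c * norm x"
  shows "norm (Ainvpow A k x) = c ^ k * norm x"
  by (induction k) (simp_all add: Ainvpow_Suc assms)

lemma summable_Ainvpow_bounded:
  assumes "\<And>x. norm (matrix_inv A *v x) = c * norm x" "0 \<le> c" "c < 1"
    and "\<And>i. norm (e (Suc i)) \<le> B"
  shows "summable (\<lambda>i. Ainvpow A (Suc i) (e (Suc i)))"
proof (rule summable_comparison_test)
  show "summable (\<lambda>i. c * B * c ^ i)"
    using assms(2,3) by (intro summable_mult summable_geometric) simp
  have "c ^ Suc i * norm (e (Suc i)) \<le> c ^ Suc i * B" for i
    using assms(2,4) by (intro mult_left_mono) auto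
  then show "\<exists>N. \<forall>i\<ge>N. norm (Ainvpow A (Suc i) (e (Suc i))) \<le> c * B * c ^ i"
    by (simp add: norm_Ainvpow[OF assms(1)] algebra_simps)
qed

definition digit_block :: "real^'n^'n \<Rightarrow> nat \<Rightarrow> (nat \<Rightarrow> real^'n) \<Rightarrow> real^'n" where
  "digit_block A p u = (\<Sum>l=1..p. Ainvpow A l (u l))"

definition ifs_map :: "real^'n^'n \<Rightarrow> nat \<Rightarrow> (nat \<Rightarrow> real^'n) \<Rightarrow> (nat \<Rightarrow> real^'n)
    \<Rightarrow> real^'n \<Rightarrow> real^'n" where
  "ifs_map A p u v =
     (\<lambda>x. Ainvpow A p (x + (\<Sum>l=1..p. Apow A (p - l) (u l) + Ainvpow A l (v l))))"

definition admissible :: "nat \<Rightarrow> (nat \<Rightarrow> 'a set) \<Rightarrow> (nat \<Rightarrow> 'a set) \<Rightarrow> (nat \<Rightarrow> 'a)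
    \<Rightarrow> (nat \<Rightarrow> 'a) \<Rightarrow> bool" where
  "admissible p U V u v \<longleftrightarrow> (\<forall>l\<in>{1..p}. u l \<in> U l \<and> v l \<in> V l)"

lemma the_IFS_eq_image:
  "the_IFS A p U V = (\<lambda>(u, v). ifs_map A p u v) ` {(u, v). admissible p U V u v}"
  unfolding the_IFS_def ifs_map_def admissible_def by auto

lemma ifs_map_eq:
  assumes "invertible A"
  shows "ifs_map A p u v x = digit_block A p u + Ainvpow A p (digit_block A p v + x)"
proof -
  interpret L: linear "Ainvpow A k" for k by (rule linear_Ainvpow)
  have "ifs_map A p u v x = Ainvpow A p x + (\<Sum>l=1..p. Ainvpow A p (Apow A (p - l) (u l)))
      + (\<Sum>l=1..p. Ainvpow A p (Ainvpow A l (v l)))"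
    unfolding ifs_map_def by (simp add: L.add L.sum sum.distrib)
  also have "(\<Sum>l=1..p. Ainvpow A p (Apow A (p - l) (u l))) = digit_block A p u"
    unfolding digit_block_def by (rule sum.cong) (auto simp: Ainvpow_Apow_diff[OF assms])
  also have "(\<Sum>l=1..p. Ainvpow A p (Ainvpow A l (v l))) = Ainvpow A p (digit_block A p v)"
    unfolding digit_block_def by (simp add: L.sum)
  finally show ?thesis by (simp add: L.add algebra_simps)
qed

lemma ifs_map_comp_eq:
  assumes "invertible A"
    and "digit_block A p u + Ainvpow A p (digit_block A p v + digit_block A p u') =
         digit_block A p u2 + Ainvpow A p (digit_block A p v2 + digit_block A p u2')"
  shows "ifs_map A p u v \<circ> ifs_map A p u' w = ifs_map A p u2 v2 \<circ> ifs_map A p u2' w"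
proof
  interpret L: linear "Ainvpow A p" by (rule linear_Ainvpow)
  fix t
  have "(ifs_map A p u v \<circ> ifs_map A p u' w) t
      = digit_block A p u + Ainvpow A p (digit_block A p v + digit_block A p u')
        + Ainvpow A p (Ainvpow A p (digit_block A p w + t))"
    by (simp add: ifs_map_eq[OF assms(1)] L.add add.assoc)
  also have "\<dots> = (ifs_map A p u2 v2 \<circ> ifs_map A p u2' w) t"
    using assms(2) by (simp add: ifs_map_eq[OF assms(1)] L.add add.assoc)
  finally show "(ifs_map A p u v \<circ> ifs_map A p u' w) t = (ifs_map A p u2 v2 \<circ> ifs_map A p u2' w) t" .
qed

lemma norm_digit_block_le:
  assumes "\<And>x. norm (matrix_inv A *v x) = c * norm x" "0 \<le> c" "c \<le> 1"
    and "\<And>l. l \<in> {1..p} \<Longrightarrow> norm (u l) \<le> B"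
  shows "norm (digit_block A p u) \<le> real p * B"
proof -
  have "norm (digit_block A p u) \<le> (\<Sum>l=1..p. norm (Ainvpow A l (u l)))"
    unfolding digit_block_def by (rule norm_sum)
  also have "\<dots> \<le> (\<Sum>l=1..p. B)"
  proof (rule sum_mono)
    fix l assume l: "l \<in> {1..p}"
    have "c ^ l * norm (u l) \<le> 1 * B"
      using assms(2,3) assms(4)[OF l] by (intro mult_mono power_le_one) auto
    then show "norm (Ainvpow A l (u l)) \<le> B"
      by (simp add: norm_Ainvpow[OF assms(1)])
  qed
  finally show ?thesis by simp
qed

lemma attractor_address:
  assumes "K = (\<Union>i\<in>I. \<phi> i ` K)" "x \<in> K"
  obtains xs ind where "xs 0 = x" "\<And>k. ind k \<in> I" "\<And>k. xs k \<in> K"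
    "\<And>k. xs k = \<phi> (ind k) (xs (Suc k))"
proof -
  have "\<forall>y\<in>K. \<exists>i\<in>I. \<exists>y'\<in>K. y = \<phi> i y'"
    using assms(1) by blast
  then obtain pick nxt where pick: "\<And>y. y \<in> K \<Longrightarrow> pick y \<in> I \<and> nxt y \<in> K \<and> y = \<phi> (pick y) (nxt y)"
    by metis
  define xs where "xs k = (nxt ^^ k) x" for k
  have xs_mem: "xs k \<in> K" for k
    by (induction k) (simp_all add: xs_def assms(2) pick)
  show thesis
  proof (rule that[of xs "pick \<circ> xs"])
    show "xs 0 = x"
      by (simp add: xs_def)
    show "(pick \<circ> xs) k \<in> I" "xs k \<in> K" "xs k = \<phi> ((pick \<circ> xs) k) (xs (Suc k))" for k
      using pick[OF xs_mem[of k]] xs_mem by (simp_all add: xs_def)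
  qed
qed

lemma open_set_condition_comp_neq:
  assumes "open_set_condition F" "f \<in> F" "g \<in> F" "h \<in> F" "h' \<in> F" "f \<noteq> g"
  shows "f \<circ> h \<noteq> g \<circ> h'"
proof
  assume comp: "f \<circ> h = g \<circ> h'"
  obtain W where W: "W \<noteq> {}" "(\<Union>f\<in>F. f ` W) \<subseteq> W" "pairwise (\<lambda>f g. disjnt (f ` W) (g ` W)) F"
    using assms(1) unfolding open_set_condition_def by blast
  obtain t where "t \<in> W" using W(1) by blast
  then have "h t \<in> W" "h' t \<in> W" using W(2) assms(4,5) by blast+
  moreover have "disjnt (f ` W) (g ` W)" using W(3) assms(2,3,6) by (auto simp: pairwise_def)
  ultimately show False
    using comp unfolding disjnt_def by (metis comp_apply disjoint_iff image_eqI)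
qed

subsection \<open>Finiteness of complete residue systems\<close>

lemma det_Ints:
  assumes "\<And>i j. M $ i $ j \<in> \<int>"
  shows "det M \<in> \<int>"
  unfolding det_def using assms by (intro Ints_sum Ints_mult Ints_prod) auto

lemma det_scaleR_lattice_mem_image:
  assumes "int_matrix A" "invertible A" "b \<in> lattice"
  shows "det A *\<^sub>R b \<in> (\<lambda>x. A *v x) ` lattice"
proof -
  have det_nz: "det A \<noteq> 0"
    using assms(2) invertible_det_nz by blast
  define x where "x = (\<chi> k. det (\<chi> i j. if j = k then b $ i else A $ i $ j) / det A)"
  have "A *v x = b"
    using cramer[OF det_nz, of x b] x_def by simp
  then have "A *v (det A *\<^sub>R x) = det A *\<^sub>R b"
    by (simp add: matrix_vector_mult_scaleR)
  moreover have "det A *\<^sub>R x \<in> lattice"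
    using assms(1,3) det_nz
    by (auto simp: lattice_def x_def int_matrix_def intro!: det_Ints)
  ultimately show ?thesis
    by (metis image_eqI)
qed

lemma complete_residue_system_eqI:
  assumes "complete_residue_system A R" "d \<in> R" "d' \<in> R" "d - d' \<in> (\<lambda>x. A *v x) ` lattice"
  shows "d = d'"
proof -
  have "(0::real^'n) \<in> lattice"
    by (simp add: lattice_def)
  then have "d - d \<in> (\<lambda>x. A *v x) ` lattice"
    by force
  moreover have "d \<in> lattice"
    using assms(1,2) by (auto simp: complete_residue_system_def)
  ultimately show ?thesis
    using assms unfolding complete_residue_system_def by blast
qed

text \<open>Since \<open>det A \<cdot> \<int>\<^sup>n \<subseteq> A \<int>\<^sup>n\<close>, an element of a residue system is determined by its
  coordinates modulo \<open>det A\<close>.\<close>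

lemma complete_residue_system_finite:
  fixes A :: "real^'n^'n"
  assumes A: "int_matrix A" "invertible A" and R: "complete_residue_system A R"
  shows "finite R"
proof -
  obtain m :: int where m: "det A = of_int m"
    using det_Ints[of A] A(1) by (auto simp: int_matrix_def elim: Ints_cases)
  have "m \<noteq> 0"
    using A(2) m invertible_det_nz by force
  define residue where "residue d = (\<lambda>i. \<lfloor>d $ i\<rfloor> mod \<bar>m\<bar>)" for d :: "real^'n"
  have "inj_on residue R"
  proof (rule inj_onI)
    fix d d' assume d: "d \<in> R" "d' \<in> R" and "residue d = residue d'"
    then have "\<forall>i. m dvd \<lfloor>d $ i\<rfloor> - \<lfloor>d' $ i\<rfloor>"
      unfolding residue_def fun_eq_iff by (simp add: mod_eq_dvd_iff)
    then have "\<forall>i. \<exists>t. \<lfloor>d $ i\<rfloor> - \<lfloor>d' $ i\<rfloor> = m * t"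
      unfolding dvd_def by blast
    then obtain t where t: "\<And>i. \<lfloor>d $ i\<rfloor> - \<lfloor>d' $ i\<rfloor> = m * t i"
      by metis
    have "d $ i = of_int \<lfloor>d $ i\<rfloor>" "d' $ i = of_int \<lfloor>d' $ i\<rfloor>" for i
      using d R by (auto simp: complete_residue_system_def lattice_def elim!: Ints_cases)
    then have "d - d' = det A *\<^sub>R (\<chi> i. of_int (t i))"
      by (simp add: vec_eq_iff m) (metis of_int_diff of_int_mult t)
    moreover have "(\<chi> i. of_int (t i)) \<in> lattice"
      by (simp add: lattice_def)
    ultimately have "d - d' \<in> (\<lambda>x. A *v x) ` lattice"
      using det_scaleR_lattice_mem_image[OF A] by metis
    then show "d = d'"
      by (rule complete_residue_system_eqI[OF R d])
  qed
  moreover have "residue ` R \<subseteq> (UNIV::'n set) \<rightarrow>\<^sub>E {0..<\<bar>m\<bar>}"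
    using \<open>m \<noteq> 0\<close> by (auto simp: residue_def)
  then have "finite (residue ` R)"
    by (rule finite_subset) (simp add: finite_PiE)
  ultimately show ?thesis
    using finite_imageD by blast
qed

lemma finite_setdiff:
  assumes "finite D" "finite E"
  shows "finite (setdiff D E)"
proof -
  have "setdiff D E = (\<lambda>(x, y). x - y) ` (D \<times> E)"
    by (auto simp: setdiff_def)
  then show ?thesis
    using assms by simp
qed

subsection \<open>Radix expansions along an address\<close>

definition radix_terms :: "real^'n^'n \<Rightarrow> (nat \<Rightarrow> real^'n) \<Rightarrow> nat \<Rightarrow> real^'n" where
  "radix_terms A e = (\<lambda>i. Ainvpow A (Suc i) (e (Suc i)))"

lemma piAE_eq_suminf: "piAE A e = suminf (radix_terms A e)"
  by (simp add: piAE_def radix_terms_def)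

text \<open>Digit \<open>j = k p + l\<close> (\<open>1 \<le> l \<le> p\<close>) of the address \<open>(us k, vs k)\<^sub>k\<close>: the \<open>v\<close>-part of
  the \<open>k-1\<close>-st map is scaled by \<open>A\<^sup>-\<^sup>p\<close> further than its \<open>u\<close>-part and so lands in the same
  position as the \<open>u\<close>-part of the \<open>k\<close>-th map.\<close>
definition address_digit :: "nat \<Rightarrow> (nat \<Rightarrow> nat \<Rightarrow> 'a::monoid_add) \<Rightarrow> (nat \<Rightarrow> nat \<Rightarrow> 'a) \<Rightarrow> nat \<Rightarrow> 'a" where
  "address_digit p us vs j = us ((j - 1) div p) ((j - 1) mod p + 1) +
     (if (j - 1) div p = 0 then 0 else vs ((j - 1) div p - 1) ((j - 1) mod p + 1))"

lemma address_digit_block: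
  assumes "i < p"
  shows "address_digit p us vs (Suc (p * k + i)) = us k (Suc i) + (if k = 0 then 0 else vs (k - 1) (Suc i))"
proof -
  have "(p * k + i) div p = k" "(p * k + i) mod p = i" using assms by auto
  then show ?thesis unfolding address_digit_def by simp
qed

lemma address_block_sum:
  assumes "0 < p"
  shows "(\<Sum>i<p * k + p. radix_terms A (address_digit p us vs) i) =
     (\<Sum>i<p * k. radix_terms A (address_digit p us vs) i) +
     Ainvpow A (p * k) ((if k = 0 then 0 else digit_block A p (vs (k - 1))) + digit_block A p (us k))"
proof -
  interpret L: linear "Ainvpow A m" for m by (rule linear_Ainvpow)
  have "(\<Sum>i<p. radix_terms A (address_digit p us vs) (p * k + i)) =
      (\<Sum>i<p. Ainvpow A (p * k) (Ainvpow A (Suc i) (us k (Suc i))) +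
        Ainvpow A (p * k) (Ainvpow A (Suc i) (if k = 0 then 0 else vs (k - 1) (Suc i))))"
    by (rule sum.cong)
      (auto simp: radix_terms_def address_digit_block L.add Ainvpow_add[symmetric])
  also have "\<dots> = Ainvpow A (p * k)
      ((if k = 0 then 0 else digit_block A p (vs (k - 1))) + digit_block A p (us k))"
    by (auto simp: digit_block_def sum.atLeast1_atMost_eq sum.distrib L.add L.sum)
  finally show ?thesis by (simp add: sum_lessThan_add)
qed

lemma address_two_blocks:
  assumes "0 < p"
  shows "(\<Sum>i<2 * p. radix_terms A (address_digit p us vs) i) =
     digit_block A p (us 0) + Ainvpow A p (digit_block A p (vs 0) + digit_block A p (us 1))"
  using address_block_sum[OF assms, of A us vs 0] address_block_sum[OF assms, of A us vs 1]
  by (simp add: mult_2)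

lemma address_partial_sums:
  assumes "invertible A" "0 < p"
    and rec: "\<And>k. xs k = ifs_map A p (us k) (vs k) (xs (Suc k))"
  shows "xs 0 = (\<Sum>i<p * k. radix_terms A (address_digit p us vs) i) +
     Ainvpow A (p * k) ((if k = 0 then 0 else digit_block A p (vs (k - 1))) + xs k)"
proof (induction k)
  case 0
  then show ?case by simp
next
  case (Suc k)
  interpret L: linear "Ainvpow A (p * k)" by (rule linear_Ainvpow)
  have "xs k = digit_block A p (us k) + Ainvpow A p (digit_block A p (vs k) + xs (Suc k))"
    using rec ifs_map_eq[OF assms(1)] by metis
  then have "Ainvpow A (p * k) ((if k = 0 then 0 else digit_block A p (vs (k - 1))) + xs k) =
      Ainvpow A (p * k) ((if k = 0 then 0 else digit_block A p (vs (k - 1))) + digit_block A p (us k))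
      + Ainvpow A (p * k + p) (digit_block A p (vs k) + xs (Suc k))"
    by (simp add: L.add Ainvpow_add add.assoc)
  moreover have "p * Suc k = p * k + p" by simp
  ultimately show ?case
    using Suc address_block_sum[OF assms(2), of A us vs k] by (simp only:) (simp add: add.assoc)
qed

lemma address_digit_mem:
  fixes \<Delta> :: "nat \<Rightarrow> 'a::ab_group_add set"
  assumes "0 < p" and adm: "\<And>k. admissible p U V (us k) (vs k)"
    and first: "\<forall>j\<in>{1..p}. \<Delta> j = U j"
    and later: "\<forall>j l. j > p \<longrightarrow> l \<in> {1..p} \<longrightarrow> j mod p = l mod p \<longrightarrow> \<Delta> j = minksum (U l) (V l)"
    and "1 \<le> j"
  shows "address_digit p us vs j \<in> \<Delta> j"
proof -
  define k l where "k = (j - 1) div p" and "l = (j - 1) mod p + 1"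
  have l: "l \<in> {1..p}"
    using assms(1) by (auto simp: l_def Suc_le_eq)
  have j: "j = p * k + l"
    using assms(5) by (simp add: k_def l_def)
  have digit: "address_digit p us vs j = us k l + (if k = 0 then 0 else vs (k - 1) l)"
    unfolding address_digit_def k_def l_def by simp
  show ?thesis
  proof (cases "k = 0")
    case True
    then show ?thesis
      using digit j l first adm[of 0] by (auto simp: admissible_def)
  next
    case False
    then have "p \<le> p * k" by simp
    moreover have "1 \<le> l"
      using l by simp
    ultimately have "j > p"
      using j by linarith
    moreover have "j mod p = l mod p"
      using j by simp
    moreover have "us k l + vs (k - 1) l \<in> minksum (U l) (V l)"
      using adm[of k] adm[of "k - 1"] l unfolding admissible_def minksum_def by blast
    ultimately show ?thesis
      using digit False later l by auto
  qed
qed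

lemma unique_rep_digitwise_eq:
  assumes rep: "unique_rep A (setdiff D D) a alpha"
    and alpha: "summable (radix_terms A alpha)"
    and w: "\<And>j. 1 \<le> j \<Longrightarrow> w j \<in> setdiff (D \<inter> translate D (alpha j)) {beta j}"
    and w': "\<And>j. 1 \<le> j \<Longrightarrow> w' j \<in> setdiff (D \<inter> translate D (alpha j)) {beta j}"
    and sums: "radix_terms A w sums z" "radix_terms A w' sums z"
    and "1 \<le> j"
  shows "w j = w' j"
proof -
  define e where "e j = w j - w' j + alpha j" for j
  have "e \<in> seqs (setdiff D D)"
    unfolding seqs_def
  proof (intro CollectI allI impI)
    fix j :: nat assume j: "1 \<le> j"
    obtain d where "d \<in> D" "w j = d - beta j"
      using w[OF j] by (auto simp: setdiff_def)
    moreover obtain d' where "d' \<in> D" "w' j = d' + alpha j - beta j"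
      using w'[OF j] by (auto simp: setdiff_def translate_def)
    ultimately show "e j \<in> setdiff D D"
      unfolding e_def setdiff_def by force
  qed
  moreover have "radix_terms A e sums (z - z + a)"
  proof -
    interpret L: linear "Ainvpow A k" for k by (rule linear_Ainvpow)
    have "radix_terms A e = (\<lambda>i. radix_terms A w i - radix_terms A w' i + radix_terms A alpha i)"
      by (simp add: fun_eq_iff radix_terms_def e_def L.add L.diff)
    moreover have "radix_terms A alpha sums a"
      using rep alpha by (auto simp: unique_rep_def is_rep_def piAE_eq_suminf sums_iff)
    ultimately show ?thesis
      using sums_add[OF sums_diff[OF sums]] by simp
  qed
  ultimately have "is_rep A (setdiff D D) a e"
    by (simp add: is_rep_def piAE_eq_suminf sums_iff)
  then have "e j = alpha j"
    using rep \<open>1 \<le> j\<close> by (simp add: unique_rep_def)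
  then show ?thesis
    by (simp add: e_def)
qed

locale radix_ifs =
  fixes A :: "real^'n^'n" and c :: real and p :: nat and U V :: "nat \<Rightarrow> (real^'n) set"
  assumes invertible: "invertible A"
    and norm_matrix_inv: "\<And>x. norm (matrix_inv A *v x) = c * norm x"
    and c_pos: "0 < c" and c_less_1: "c < 1"
    and p_pos: "0 < p"
    and finite_digit_sets: "\<And>l. l \<in> {1..p} \<Longrightarrow> finite (U l) \<and> finite (V l)"
begin

lemma summable_radix_terms_finite:
  assumes "finite E" "e \<in> seqs E"
  shows "summable (radix_terms A e)"
proof -
  obtain B where "\<forall>x\<in>E. norm x \<le> B"
    using finite_imp_bounded[OF assms(1)] bounded_iff by blast
  then have "norm (e (Suc i)) \<le> B" for i
    using assms(2) by (simp add: seqs_def)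
  then show ?thesis
    unfolding radix_terms_def using c_pos c_less_1
    by (intro summable_Ainvpow_bounded[OF norm_matrix_inv]) auto
qed

lemma admissible_family_bounded:
  assumes "\<And>k. admissible p U V (us k) (vs k)"
  obtains B where "0 \<le> B" "\<And>k l. l \<in> {1..p} \<Longrightarrow> norm (us k l) \<le> B"
    "\<And>k l. l \<in> {1..p} \<Longrightarrow> norm (vs k l) \<le> B"
proof -
  have "finite (\<Union>l\<in>{1..p}. U l \<union> V l)"
    using finite_digit_sets by auto
  then obtain B where B: "\<And>x. x \<in> (\<Union>l\<in>{1..p}. U l \<union> V l) \<Longrightarrow> norm x \<le> B"
    using finite_imp_bounded bounded_iff by metis
  show thesis
  proof (rule that[of "max B 0"])
    fix k l assume l: "l \<in> {1..p}"
    then have "us k l \<in> (\<Union>l\<in>{1..p}. U l \<union> V l)" "vs k l \<in> (\<Union>l\<in>{1..p}. U l \<union> V l)"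
      using assms[of k] unfolding admissible_def by blast+
    then show "norm (us k l) \<le> max B 0" "norm (vs k l) \<le> max B 0"
      using B by (simp_all add: le_max_iff_disj)
  qed simp
qed

lemma address_tail_tendsto_zero:
  assumes "\<And>k l. l \<in> {1..p} \<Longrightarrow> norm (vs k l) \<le> B" "0 \<le> B" "\<And>k. norm (xs k) \<le> B'"
  shows "(\<lambda>k. Ainvpow A (p * k) ((if k = 0 then 0 else digit_block A p (vs (k - 1))) + xs k))
    \<longlonglongrightarrow> 0"
proof (rule Lim_null_comparison)
  have "norm (Ainvpow A (p * k) ((if k = 0 then 0 else digit_block A p (vs (k - 1))) + xs k))
      \<le> (c ^ p) ^ k * (real p * B + B')" for k
  proof -
    have "norm (if k = 0 then 0 else digit_block A p (vs (k - 1))) \<le> real p * B"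
      using norm_digit_block_le[OF norm_matrix_inv] c_pos c_less_1 assms(1,2) by simp
    then have "norm ((if k = 0 then 0 else digit_block A p (vs (k - 1))) + xs k) \<le> real p * B + B'"
      using assms(3) norm_triangle_le add_mono by blast
    then show ?thesis
      using c_pos by (simp add: norm_Ainvpow[OF norm_matrix_inv] power_mult mult_left_mono)
  qed
  then show "\<forall>\<^sub>F k in sequentially. norm (Ainvpow A (p * k)
      ((if k = 0 then 0 else digit_block A p (vs (k - 1))) + xs k)) \<le> (c ^ p) ^ k * (real p * B + B')"
    by simp
  have "(\<lambda>k. (c ^ p) ^ k) \<longlonglongrightarrow> 0"
    using c_pos c_less_1 p_pos by (intro LIMSEQ_power_zero) (simp add: power_less_one_iff)
  then show "(\<lambda>k. (c ^ p) ^ k * (real p * B + B')) \<longlonglongrightarrow> 0"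
    by (rule tendsto_mult_left_zero)
qed

lemma address_expansion:
  assumes rec: "\<And>k. xs k = ifs_map A p (us k) (vs k) (xs (Suc k))"
    and adm: "\<And>k. admissible p U V (us k) (vs k)"
    and bnd: "bounded (range xs)"
  shows "radix_terms A (address_digit p us vs) sums xs 0"
proof (rule sums_of_lessThan_mult_tendsto[OF _ p_pos])
  obtain B where B: "0 \<le> B" and us_le: "\<And>k l. l \<in> {1..p} \<Longrightarrow> norm (us k l) \<le> B"
    and vs_le: "\<And>k l. l \<in> {1..p} \<Longrightarrow> norm (vs k l) \<le> B"
    using admissible_family_bounded[of us vs, OF adm] by blast
  obtain B' where B': "\<And>k. norm (xs k) \<le> B'"
    using bnd by (auto simp: bounded_iff)
  have digit_le: "norm (address_digit p us vs j) \<le> B + B" for j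
  proof -
    define k l where "k = (j - 1) div p" and "l = (j - 1) mod p + 1"
    have l: "l \<in> {1..p}"
      using p_pos by (auto simp: l_def Suc_le_eq)
    have "norm (address_digit p us vs j) \<le> norm (us k l) + norm (if k = 0 then 0 else vs (k - 1) l)"
      unfolding address_digit_def k_def l_def by (rule norm_triangle_ineq)
    also have "\<dots> \<le> B + B"
      using us_le[OF l] vs_le[OF l] B by (intro add_mono) auto
    finally show ?thesis .
  qed
  show "summable (radix_terms A (address_digit p us vs))"
    unfolding radix_terms_def
    by (rule summable_Ainvpow_bounded[OF norm_matrix_inv _ c_less_1 digit_le]) (use c_pos in simp)
  have "(\<lambda>k. Ainvpow A (p * k) ((if k = 0 then 0 else digit_block A p (vs (k - 1))) + xs k))
      \<longlonglongrightarrow> 0"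
    by (rule address_tail_tendsto_zero[OF vs_le B B'])
  then have "(\<lambda>k. xs 0 - Ainvpow A (p * k) ((if k = 0 then 0 else digit_block A p (vs (k - 1))) + xs k))
      \<longlonglongrightarrow> xs 0 - 0"
    by (intro tendsto_diff tendsto_const)
  moreover have "(\<Sum>i<p * k. radix_terms A (address_digit p us vs) i) =
      xs 0 - Ainvpow A (p * k) ((if k = 0 then 0 else digit_block A p (vs (k - 1))) + xs k)" for k
    using address_partial_sums[where xs=xs and us=us and vs=vs and k=k, OF invertible p_pos rec]
    by (rule eq_diff_eq[THEN iffD2, OF sym])
  ultimately show "(\<lambda>k. \<Sum>i<p * k. radix_terms A (address_digit p us vs) i) \<longlonglongrightarrow> xs 0"
    by simp
qed

lemma attractor_image_expansion:
  assumes K: "is_attractor (the_IFS A p U V) K" and x: "x \<in> K" and uv: "admissible p U V u v"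
  obtains us vs where "us 0 = u" "vs 0 = v" "\<And>k. admissible p U V (us k) (vs k)"
    "radix_terms A (address_digit p us vs) sums ifs_map A p u v x"
proof -
  have K_eq: "K = (\<Union>i\<in>{(u, v). admissible p U V u v}. (\<lambda>(u, v). ifs_map A p u v) i ` K)"
    using K by (simp add: is_attractor_def the_IFS_eq_image)
  obtain xs ind where xs: "xs 0 = x" "\<And>k. ind k \<in> {(u, v). admissible p U V u v}"
    "\<And>k. xs k \<in> K" "\<And>k. xs k = (\<lambda>(u, v). ifs_map A p u v) (ind k) (xs (Suc k))"
    using attractor_address[OF K_eq x] by blast
  define us where "us k = (case k of 0 \<Rightarrow> u | Suc k \<Rightarrow> fst (ind k))" for k
  define vs where "vs k = (case k of 0 \<Rightarrow> v | Suc k \<Rightarrow> snd (ind k))" for k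
  define ys where "ys k = (case k of 0 \<Rightarrow> ifs_map A p u v x | Suc k \<Rightarrow> xs k)" for k
  have adm: "admissible p U V (us k) (vs k)" for k
    using uv xs(2) by (cases k) (auto simp: us_def vs_def case_prod_beta)
  have "radix_terms A (address_digit p us vs) sums ys 0"
  proof (rule address_expansion[OF _ adm])
    show "ys k = ifs_map A p (us k) (vs k) (ys (Suc k))" for k
    proof (cases k)
      case 0
      then show ?thesis by (simp add: us_def vs_def ys_def xs(1))
    next
      case (Suc k')
      then show ?thesis
        using xs(4)[of k'] by (simp add: us_def vs_def ys_def split: prod.splits)
    qed
    have "range ys \<subseteq> insert (ys 0) K"
      using xs(3) by (auto simp: ys_def split: nat.splits)
    moreover have "bounded K"
      using K compact_imp_bounded by (auto simp: is_attractor_def)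
    ultimately show "bounded (range ys)"
      by (meson bounded_insert bounded_subset)
  qed
  moreover have "us 0 = u" "vs 0 = v" "ys 0 = ifs_map A p u v x"
    by (simp_all add: us_def vs_def ys_def)
  ultimately show thesis
    using that adm by metis
qed

lemma overlap_imp_comp_eq:
  assumes rep: "unique_rep A (setdiff D D) a alpha"
    and alpha: "summable (radix_terms A alpha)"
    and first: "\<forall>j\<in>{1..p}. setdiff (D \<inter> translate D (alpha j)) {beta j} = U j"
    and later: "\<forall>j l. j > p \<longrightarrow> l \<in> {1..p} \<longrightarrow> j mod p = l mod p \<longrightarrow>
            setdiff (D \<inter> translate D (alpha j)) {beta j} = minksum (U l) (V l)"
    and K: "is_attractor (the_IFS A p U V) K"
    and f: "f \<in> the_IFS A p U V" and g: "g \<in> the_IFS A p U V"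
    and x: "x \<in> K" and y: "y \<in> K" and overlap: "f x = g y"
  obtains h h' where "h \<in> the_IFS A p U V" "h' \<in> the_IFS A p U V" "f \<circ> h = g \<circ> h'"
proof -
  obtain u v where f_eq: "f = ifs_map A p u v" and uv: "admissible p U V u v"
    using f by (auto simp: the_IFS_eq_image)
  obtain u' v' where g_eq: "g = ifs_map A p u' v'" and uv': "admissible p U V u' v'"
    using g by (auto simp: the_IFS_eq_image)
  obtain us vs where us: "us 0 = u" "vs 0 = v" "\<And>k. admissible p U V (us k) (vs k)"
    and sums: "radix_terms A (address_digit p us vs) sums f x"
    using attractor_image_expansion[OF K x uv] unfolding f_eq by blast
  obtain us' vs' where us': "us' 0 = u'" "vs' 0 = v'" "\<And>k. admissible p U V (us' k) (vs' k)"
    and sums': "radix_terms A (address_digit p us' vs') sums f x"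
    using attractor_image_expansion[OF K y uv'] unfolding overlap g_eq by blast
  have "address_digit p us vs j = address_digit p us' vs' j" if "1 \<le> j" for j
    using unique_rep_digitwise_eq[OF rep alpha address_digit_mem[OF p_pos us(3) first later]
        address_digit_mem[OF p_pos us'(3) first later] sums sums' that] .
  then have "(\<Sum>i<2 * p. radix_terms A (address_digit p us vs) i) =
      (\<Sum>i<2 * p. radix_terms A (address_digit p us' vs') i)"
    by (simp add: radix_terms_def)
  \<comment> \<open>The first \<open>2p\<close> digits do not involve \<open>vs' 1\<close>, so both composites may use \<open>vs 1\<close>.\<close>
  then have "f \<circ> ifs_map A p (us 1) (vs 1) = g \<circ> ifs_map A p (us' 1) (vs 1)"
    unfolding f_eq g_eq address_two_blocks[OF p_pos] us(1,2) us'(1,2)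
    by (rule ifs_map_comp_eq[OF invertible])
  moreover have "ifs_map A p (us 1) (vs 1) \<in> the_IFS A p U V"
    "ifs_map A p (us' 1) (vs 1) \<in> the_IFS A p U V"
    using us(3)[of 1] us'(3)[of 1] by (auto simp: the_IFS_eq_image admissible_def)
  ultimately show thesis
    using that by blast
qed

lemma open_set_condition_imp_strong_separation:
  assumes rep: "unique_rep A (setdiff D D) a alpha"
    and alpha: "summable (radix_terms A alpha)"
    and first: "\<forall>j\<in>{1..p}. setdiff (D \<inter> translate D (alpha j)) {beta j} = U j"
    and later: "\<forall>j l. j > p \<longrightarrow> l \<in> {1..p} \<longrightarrow> j mod p = l mod p \<longrightarrow>
            setdiff (D \<inter> translate D (alpha j)) {beta j} = minksum (U l) (V l)"
    and osc: "open_set_condition (the_IFS A p U V)"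
  shows "strong_separation_condition (the_IFS A p U V)"
  unfolding strong_separation_condition_def
proof (intro allI impI pairwiseI)
  fix K f g assume K: "is_attractor (the_IFS A p U V) K"
    and f: "f \<in> the_IFS A p U V" and g: "g \<in> the_IFS A p U V" and "f \<noteq> g"
  show "disjnt (f ` K) (g ` K)"
  proof (rule ccontr)
    assume "\<not> disjnt (f ` K) (g ` K)"
    then obtain x y where "x \<in> K" "y \<in> K" "f x = g y"
      unfolding disjnt_def by blast
    then obtain h h' where "h \<in> the_IFS A p U V" "h' \<in> the_IFS A p U V" "f \<circ> h = g \<circ> h'"
      using overlap_imp_comp_eq[OF rep alpha first later K f g] by blast
    then show False
      using open_set_condition_comp_neq[OF osc f g] \<open>f \<noteq> g\<close> by blast
  qed
qed

end

theorem mainTheorem8: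
  fixes A :: "real^'n^'n" and D :: "(real^'n) set" and a :: "real^'n"
    and alpha beta :: "nat \<Rightarrow> real^'n" and p :: nat
    and U V :: "nat \<Rightarrow> (real^'n) set"
  assumes "int_matrix A" and "invertible A"
    and "is_similarity (\<lambda>x. matrix_inv A *v x)"
    and "\<exists>R. complete_residue_system A R \<and> D \<subseteq> R"
    and "a \<in> TAE A (setdiff D D)"
    and "unique_rep A (setdiff D D) a alpha"
    and "p > 0"
    and "\<forall>l\<in>{1..p}. finite (U l) \<and> finite (V l)"
    and "beta \<in> seqs D"
    and "\<forall>j\<in>{1..p}. setdiff (D \<inter> translate D (alpha j)) {beta j} = U j"
    and "\<forall>j l. j > p \<longrightarrow> l \<in> {1..p} \<longrightarrow> j mod p = l mod p \<longrightarrow>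
            setdiff (D \<inter> translate D (alpha j)) {beta j} = minksum (U l) (V l)"
    and "open_set_condition (the_IFS A p U V)"
  shows "strong_separation_condition (the_IFS A p U V)"
proof -
  obtain c where "0 < c" "c < 1" "\<And>x. norm (matrix_inv A *v x) = c * norm x"
    using is_similarity_matrix_norm[OF assms(3)] by blast
  then interpret radix_ifs A c p U V
    using assms(2,7,8) by unfold_locales auto
  obtain R where "complete_residue_system A R" "D \<subseteq> R"
    using assms(4) by blast
  then have "finite D"
    using complete_residue_system_finite[OF assms(1,2)] finite_subset by blast
  moreover have "alpha \<in> seqs (setdiff D D)"
    using assms(6) by (simp add: unique_rep_def is_rep_def)
  ultimately have "summable (radix_terms A alpha)"
    by (meson summable_radix_terms_finite finite_setdiff)
  then show ?thesis
    using open_set_condition_imp_strong_separation assms(6,10,11,12) by blast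
qed

end
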